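(* Let $S$ be a group and $A,B$ left $S$-acts such that there exist injective homomorphisms $A\rightarrowtail B^I$ and $B\rightarrowtail A^J$ for some sets $I,J$. Then $C\amalg A$ and $C\amalg B$ are geometrically equivalent for every left $S$-act $C$.
   Context: A left $S$-act is a nonempty set with an action $S\times A\to A$ satisfying $1a=a$, $(st)a=s(ta)$; homomorphisms preserve the action; $\amalg$ denotes coproduct (disjoint union) and $B^I$ is the cartesian power with componentwise action. For a nonempty finite set $X$, $F_X=\coprod_{x\in X}S_x$ is the free $S$-act on $X$. For an $S$-act $G$ and a relation $T\subseteq F_X\times F_X$, $T'_G=\{\mu:F_X\to G \text{ homomorphism}: T\subseteq\ker\mu\}$ and $T''_G=\bigcap_{\mu\in T'_G}\ker\mu$ (empty intersection $=F_X\times F_X$). $S$-acts $G_1,G_2$ are geometrically equivalent iff $T''_{G_1}=T''_{G_2}$ for all nonempty finite $X$ and all $T\subseteq F_X\times F_X$. *)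

theory Defs
  imports "HOL-Algebra.Group" "HOL-Library.FuncSet"
begin

type_synonym ('s, 'a) sact = "'a set \<times> ('s \<Rightarrow> 'a \<Rightarrow> 'a)"

definition car :: "('s, 'a) sact \<Rightarrow> 'a set" where "car A = fst A"
definition act :: "('s, 'a) sact \<Rightarrow> 's \<Rightarrow> 'a \<Rightarrow> 'a" where "act A = snd A"

definition is_act :: "('s, 'm) monoid_scheme \<Rightarrow> ('s, 'a) sact \<Rightarrow> bool" where
  "is_act S A \<longleftrightarrow> car A \<noteq> {}
     \<and> (\<forall>s\<in>carrier S. \<forall>a\<in>car A. act A s a \<in> car A)
     \<and> (\<forall>a\<in>car A. act A \<one>\<^bsub>S\<^esub> a = a)
     \<and> (\<forall>s\<in>carrier S. \<forall>t\<in>carrier S. \<forall>a\<in>car A.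
          act A (s \<otimes>\<^bsub>S\<^esub> t) a = act A s (act A t a))"

definition act_hom :: "('s, 'm) monoid_scheme \<Rightarrow> ('s, 'a) sact \<Rightarrow> ('s, 'b) sact \<Rightarrow> ('a \<Rightarrow> 'b) \<Rightarrow> bool" where
  "act_hom S A B f \<longleftrightarrow> (\<forall>a\<in>car A. f a \<in> car B)
     \<and> (\<forall>s\<in>carrier S. \<forall>a\<in>car A. f (act A s a) = act B s (f a))"

definition coprod :: "('s, 'a) sact \<Rightarrow> ('s, 'b) sact \<Rightarrow> ('s, 'a + 'b) sact" where
  "coprod A B = (Inl ` car A \<union> Inr ` car B,
     \<lambda>s x. case x of Inl a \<Rightarrow> Inl (act A s a) | Inr b \<Rightarrow> Inr (act B s b))"

definition act_power :: "('s, 'b) sact \<Rightarrow> 'i set \<Rightarrow> ('s, 'i \<Rightarrow> 'b) sact" where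
  "act_power B I = (I \<rightarrow>\<^sub>E car B, \<lambda>s f. \<lambda>i\<in>I. act B s (f i))"

text \<open>Free act F_X = coproduct of copies S_x of S, x in X, represented as X \<times> S.\<close>
definition free_act :: "('s, 'm) monoid_scheme \<Rightarrow> 'x set \<Rightarrow> ('s, 'x \<times> 's) sact" where
  "free_act S X = (X \<times> carrier S, \<lambda>s (x, t). (x, s \<otimes>\<^bsub>S\<^esub> t))"

definition hom_ker :: "('s, 'a) sact \<Rightarrow> ('a \<Rightarrow> 'b) \<Rightarrow> ('a \<times> 'a) set" where
  "hom_ker A \<mu> = {(u, v). u \<in> car A \<and> v \<in> car A \<and> \<mu> u = \<mu> v}"

definition T_prime :: "('s, 'm) monoid_scheme \<Rightarrow> 'x set \<Rightarrow> ('s, 'g) sact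
    \<Rightarrow> (('x \<times> 's) \<times> ('x \<times> 's)) set \<Rightarrow> (('x \<times> 's) \<Rightarrow> 'g) set" where
  "T_prime S X G T = {\<mu>. act_hom S (free_act S X) G \<mu> \<and> T \<subseteq> hom_ker (free_act S X) \<mu>}"

text \<open>T'' = intersection of the kernels; empty intersection is F_X \<times> F_X.\<close>
definition T_dprime :: "('s, 'm) monoid_scheme \<Rightarrow> 'x set \<Rightarrow> ('s, 'g) sact
    \<Rightarrow> (('x \<times> 's) \<times> ('x \<times> 's)) set \<Rightarrow> (('x \<times> 's) \<times> ('x \<times> 's)) set" where
  "T_dprime S X G T = (car (free_act S X) \<times> car (free_act S X)) \<inter>
       (\<Inter>\<mu>\<in>T_prime S X G T. hom_ker (free_act S X) \<mu>)"

text \<open>Geometric equivalence; finite sets of variables are taken as finite sets of naturals.\<close>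
definition geom_equiv :: "('s, 'm) monoid_scheme \<Rightarrow> ('s, 'a) sact \<Rightarrow> ('s, 'b) sact \<Rightarrow> bool" where
  "geom_equiv S G1 G2 \<longleftrightarrow>
     (\<forall>X :: nat set. finite X \<and> X \<noteq> {} \<longrightarrow>
        (\<forall>T. T \<subseteq> car (free_act S X) \<times> car (free_act S X) \<longrightarrow>
           T_dprime S X G1 T = T_dprime S X G2 T))"

end

theory Submission imports Defs begin

text \<open>If A embeds into a power of B, the coordinate projections form a nonempty family of
  homomorphisms A \<rightarrow> B separating the points of A; when the exponent is empty, A is trivial and
  the mutual embedding makes B trivial too, so the constant map is such a family. A separating
  family H for A over B lets every homomorphism F_X \<rightarrow> C \<amalg> A be recovered, up to kernel,
  from its composites F_X \<rightarrow> C \<amalg> B with id \<amalg> h, h \<in> H; hence every relation that holds in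
  C \<amalg> B holds in C \<amalg> A. Symmetry gives the equivalence.\<close>

text \<open>Nonemptiness of H is what keeps the two summands of C \<amalg> A apart under the maps id \<amalg> h.\<close>

definition separating_homs ::
    "('s, 'm) monoid_scheme \<Rightarrow> ('s, 'a) sact \<Rightarrow> ('s, 'b) sact \<Rightarrow> ('a \<Rightarrow> 'b) set \<Rightarrow> bool" where
  "separating_homs S A B H \<longleftrightarrow> H \<noteq> {} \<and> (\<forall>h\<in>H. act_hom S A B h)
     \<and> (\<forall>a\<in>car A. \<forall>a'\<in>car A. (\<forall>h\<in>H. h a = h a') \<longrightarrow> a = a')"

lemma act_hom_in_car: "act_hom S A B f \<Longrightarrow> a \<in> car A \<Longrightarrow> f a \<in> car B"
  unfolding act_hom_def by auto

lemma act_hom_comp: "act_hom S F G \<mu> \<Longrightarrow> act_hom S G K \<nu> \<Longrightarrow> act_hom S F K (\<nu> \<circ> \<mu>)"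
  unfolding act_hom_def by auto

lemma act_hom_coprod_map: "act_hom S A B h \<Longrightarrow> act_hom S (coprod C A) (coprod C B) (map_sum id h)"
  unfolding act_hom_def coprod_def car_def act_def by auto

lemma car_act_power: "car (act_power B I) = I \<rightarrow>\<^sub>E car B"
  unfolding act_power_def car_def by simp

lemma act_hom_power_proj:
  "act_hom S A (act_power B I) f \<Longrightarrow> i \<in> I \<Longrightarrow> act_hom S A B (\<lambda>a. f a i)"
  unfolding act_hom_def act_power_def car_def act_def by (auto simp: PiE_iff)

lemma PiE_subsingleton:
  assumes "I = {} \<or> (\<forall>b\<in>B. \<forall>b'\<in>B. b = b')"
  shows "\<forall>x\<in>I \<rightarrow>\<^sub>E B. \<forall>y\<in>I \<rightarrow>\<^sub>E B. x = y"
proof (intro ballI)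
  fix x y assume xy: "x \<in> I \<rightarrow>\<^sub>E B" "y \<in> I \<rightarrow>\<^sub>E B"
  show "x = y"
    using PiE_ext[OF xy] PiE_mem[OF xy(1)] PiE_mem[OF xy(2)] assms by blast
qed

lemma subsingleton_if_embeds_into_power:
  assumes "act_hom S A (act_power B I) f" "inj_on f (car A)"
    and "I = {} \<or> (\<forall>b\<in>car B. \<forall>b'\<in>car B. b = b')"
  shows "\<forall>a\<in>car A. \<forall>a'\<in>car A. a = a'"
proof (intro ballI)
  fix a a' assume a: "a \<in> car A" "a' \<in> car A"
  then have "f a \<in> I \<rightarrow>\<^sub>E car B" "f a' \<in> I \<rightarrow>\<^sub>E car B"
    using act_hom_in_car[OF assms(1)] a by (simp_all add: car_act_power)
  then have "f a = f a'" using PiE_subsingleton[OF assms(3)] by blast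
  then show "a = a'" using assms(2) a by (auto dest: inj_onD)
qed

lemma separating_homs_proj:
  assumes "act_hom S A (act_power B I) f" "inj_on f (car A)" "I \<noteq> {}"
  shows "separating_homs S A B ((\<lambda>i a. f a i) ` I)"
  unfolding separating_homs_def
proof (intro conjI ballI impI)
  show "(\<lambda>i a. f a i) ` I \<noteq> {}" using assms(3) by simp
  show "act_hom S A B h" if "h \<in> (\<lambda>i a. f a i) ` I" for h
    using that act_hom_power_proj[OF assms(1)] by blast
  fix a a' assume a: "a \<in> car A" "a' \<in> car A"
    and eq: "\<forall>h\<in>(\<lambda>i a. f a i) ` I. h a = h a'"
  have "f a \<in> I \<rightarrow>\<^sub>E car B" "f a' \<in> I \<rightarrow>\<^sub>E car B"
    using act_hom_in_car[OF assms(1)] a by (simp_all add: car_act_power)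
  moreover have "f a i = f a' i" if "i \<in> I" for i
    using eq that by auto
  ultimately have "f a = f a'" by (rule PiE_ext)
  then show "a = a'" using assms(2) a by (auto dest: inj_onD)
qed

lemma separating_homs_const:
  assumes "is_act S B" "b \<in> car B" "\<forall>b'\<in>car B. b' = b"
    and "\<forall>a\<in>car A. \<forall>a'\<in>car A. a = a'"
  shows "separating_homs S A B {\<lambda>_. b}"
proof -
  have "act B s b = b" if "s \<in> carrier S" for s
    using assms(1,2,3) that unfolding is_act_def by blast
  then show ?thesis
    using assms(2,4) unfolding separating_homs_def act_hom_def by auto
qed

lemma separating_homs_if_mutual_embedding:
  assumes "is_act S B"
    and f: "act_hom S A (act_power B I) f" "inj_on f (car A)"
    and g: "act_hom S B (act_power A J) g" "inj_on g (car B)"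
  shows "\<exists>H. separating_homs S A B H"
proof (cases "I = {}")
  case False
  then show ?thesis using separating_homs_proj[OF f] by blast
next
  case True
  have A_trivial: "\<forall>a\<in>car A. \<forall>a'\<in>car A. a = a'"
    using subsingleton_if_embeds_into_power[OF f] True by blast
  then have B_trivial: "\<forall>b\<in>car B. \<forall>b'\<in>car B. b = b'"
    using subsingleton_if_embeds_into_power[OF g] by blast
  obtain b where "b \<in> car B" using assms(1) unfolding is_act_def by blast
  then show ?thesis
    using separating_homs_const[OF assms(1) _ _ A_trivial] B_trivial by blast
qed

lemma coprod_map_separating:
  assumes "separating_homs S A B H"
    and "x \<in> car (coprod C A)" "y \<in> car (coprod C A)"
    and eq: "\<forall>h\<in>H. map_sum id h x = map_sum id h y"
  shows "x = y"
proof -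
  obtain h0 where "h0 \<in> H" using assms(1) unfolding separating_homs_def by blast
  with eq have "map_sum id h0 x = map_sum id h0 y" by blast
  then consider c where "x = Inl c" "y = Inl c" | a a' where "x = Inr a" "y = Inr a'"
    by (cases x; cases y) auto
  then show ?thesis
  proof cases
    case (2 a a')
    then have "a \<in> car A" "a' \<in> car A" "\<forall>h\<in>H. h a = h a'"
      using assms(2,3) eq unfolding coprod_def car_def by auto
    with 2 assms(1) show ?thesis unfolding separating_homs_def by blast
  qed simp
qed

lemma T_prime_coprod_map:
  assumes "\<mu> \<in> T_prime S X (coprod C A) T" "act_hom S A B h"
  shows "map_sum id h \<circ> \<mu> \<in> T_prime S X (coprod C B) T"
proof -
  have \<mu>: "act_hom S (free_act S X) (coprod C A) \<mu>" "T \<subseteq> hom_ker (free_act S X) \<mu>"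
    using assms(1) unfolding T_prime_def by auto
  have "act_hom S (free_act S X) (coprod C B) (map_sum id h \<circ> \<mu>)"
    by (rule act_hom_comp[OF \<mu>(1) act_hom_coprod_map[OF assms(2)]])
  with \<mu>(2) show ?thesis
    unfolding T_prime_def hom_ker_def by auto
qed

lemma T_dprime_coprod_subset:
  assumes H: "separating_homs S A B H"
  shows "T_dprime S X (coprod C B) T \<subseteq> T_dprime S X (coprod C A) T"
proof (clarify)
  fix u v assume uv: "(u, v) \<in> T_dprime S X (coprod C B) T"
  then have F: "u \<in> car (free_act S X)" "v \<in> car (free_act S X)"
    unfolding T_dprime_def by auto
  have "\<mu> u = \<mu> v" if \<mu>: "\<mu> \<in> T_prime S X (coprod C A) T" for \<mu>
  proof (rule coprod_map_separating[OF H])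
    have "act_hom S (free_act S X) (coprod C A) \<mu>" using \<mu> unfolding T_prime_def by blast
    then show "\<mu> u \<in> car (coprod C A)" "\<mu> v \<in> car (coprod C A)"
      using F by (auto dest: act_hom_in_car)
    show "\<forall>h\<in>H. map_sum id h (\<mu> u) = map_sum id h (\<mu> v)"
      using uv T_prime_coprod_map[OF \<mu>] H
      unfolding T_dprime_def hom_ker_def separating_homs_def by fastforce
  qed
  with F show "(u, v) \<in> T_dprime S X (coprod C A) T"
    unfolding T_dprime_def hom_ker_def by auto
qed

theorem proposition3p19:
  fixes S :: "('s, 'm) monoid_scheme"
    and A :: "('s, 'a) sact" and B :: "('s, 'b) sact" and C :: "('s, 'c) sact"
    and I :: "'i set" and J :: "'j set"
  assumes "group S"
    and "is_act S A" and "is_act S B"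
    and "\<exists>f. act_hom S A (act_power B I) f \<and> inj_on f (car A)"
    and "\<exists>g. act_hom S B (act_power A J) g \<and> inj_on g (car B)"
  shows "\<forall>C :: ('s, 'c) sact. is_act S C \<longrightarrow> geom_equiv S (coprod C A) (coprod C B)"
proof (intro allI impI)
  fix C :: "('s, 'c) sact"
  obtain f where f: "act_hom S A (act_power B I) f" "inj_on f (car A)" using assms(4) by blast
  obtain g where g: "act_hom S B (act_power A J) g" "inj_on g (car B)" using assms(5) by blast
  obtain HAB where "separating_homs S A B HAB"
    using separating_homs_if_mutual_embedding[OF assms(3) f g] by blast
  moreover obtain HBA where "separating_homs S B A HBA"
    using separating_homs_if_mutual_embedding[OF assms(2) g f] by blast
  ultimately show "geom_equiv S (coprod C A) (coprod C B)"
    unfolding geom_equiv_def by (metis subset_antisym T_dprime_coprod_subset)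
qed

end
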